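(* Let $G$ be a group with a gliding system and $\mathcal{D}\subset G$. The glide complex $X_{\mathcal{D}}$ is nonpositively curved if and only if $\mathcal{D}$ is regular and satisfies the cube condition.
   Context: Gliding system $(\mathcal{G},\mathcal{I})$ in $G$: $\mathcal{G}\subset G\setminus\{1\}$ closed under inversion (glides), $\mathcal{I}\subset\mathcal{G}\times\mathcal{G}$ (independence) with $(s^{-1},t),(t,s)\in\mathcal{I}$ and $st=ts\ne1$ whenever $(s,t)\in\mathcal{I}$. Pre-cubic set: finite set $S$ of pairwise independent glides, $[S]=\prod_{s\in S}s$; cubic: pre-cubic with $[T_1]\ne[T_2]$ for distinct $T_1,T_2\subset S$. Glide complex $X_G$: cubed complex with one $k$-cube for each equivalence class of based cubes $(A,S)$ ($A\in G$, $S$ cubic of size $k$) under $(A,S)\sim([T]A,(S\setminus T)\cup\{t^{-1}:t\in T\})$, $T\subset S$; vertices of the cube are $[T]A$ ($T\subset S$), faces are cubes of $(A,S')$, $S'\subset S$; 0-skeleton $G$. $X_{\mathcal{D}}$: subcomplex of cubes all of whose vertices lie in $\mathcal{D}$. $\mathcal{D}$ is regular if for every $A\in\mathcal{D}$ every pre-cubic $S$ with $sA\in\mathcal{D}$ ($s\in S$) and $stA\in\mathcal{D}$ (distinct $s,t\in S$) is cubic. $\mathcal{D}$ satisfies the cube condition if for every $A\in\mathcal{D}$ and pairwise independent glides $s_1,s_2,s_3$ with $s_1A,s_2A,s_3A,s_1s_2A,s_1s_3A,s_2s_3A\in\mathcal{D}$ one has $s_1s_2s_3A\in\mathcal{D}$.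 A cubed complex is nonpositively curved if the link of every $0$-cell is a simplicial complex and is a flag complex. *)

theory Defs
  imports "HOL-Algebra.Group"
begin

type_synonym 'g bcube = "'g \<times> 'g set"

definition gliding_system :: "('g,'b) monoid_scheme \<Rightarrow> 'g set \<Rightarrow> ('g \<times> 'g) set \<Rightarrow> bool" where
  "gliding_system G Gl Ind \<longleftrightarrow>
     group G \<and> Gl \<subseteq> carrier G - {\<one>\<^bsub>G\<^esub>} \<and> (\<forall>s\<in>Gl. inv\<^bsub>G\<^esub> s \<in> Gl) \<and>
     Ind \<subseteq> Gl \<times> Gl \<and>
     (\<forall>s t. (s, t) \<in> Ind \<longrightarrow>
        (inv\<^bsub>G\<^esub> s, t) \<in> Ind \<and> (t, s) \<in> Ind \<and>
        s \<otimes>\<^bsub>G\<^esub> t = t \<otimes>\<^bsub>G\<^esub> s \<and> s \<otimes>\<^bsub>G\<^esub> t \<noteq> \<one>\<^bsub>G\<^esub>)"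

text \<open>The product [S] of a finite set of pairwise commuting elements
  (taken in any enumeration order).\<close>
definition glide_prod :: "('g,'b) monoid_scheme \<Rightarrow> 'g set \<Rightarrow> 'g" where
  "glide_prod G S = (SOME p. \<exists>xs. distinct xs \<and> set xs = S \<and>
      p = foldr (\<lambda>x y. x \<otimes>\<^bsub>G\<^esub> y) xs \<one>\<^bsub>G\<^esub>)"

definition pre_cubic :: "('g,'b) monoid_scheme \<Rightarrow> 'g set \<Rightarrow> ('g \<times> 'g) set \<Rightarrow> 'g set \<Rightarrow> bool" where
  "pre_cubic G Gl Ind S \<longleftrightarrow> finite S \<and> S \<subseteq> Gl \<and> (\<forall>s\<in>S. \<forall>t\<in>S. s \<noteq> t \<longrightarrow> (s, t) \<in> Ind)"

definition cubic :: "('g,'b) monoid_scheme \<Rightarrow> 'g set \<Rightarrow> ('g \<times> 'g) set \<Rightarrow> 'g set \<Rightarrow> bool" where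
  "cubic G Gl Ind S \<longleftrightarrow> pre_cubic G Gl Ind S \<and> inj_on (glide_prod G) (Pow S)"

definition based_cube :: "('g,'b) monoid_scheme \<Rightarrow> 'g set \<Rightarrow> ('g \<times> 'g) set \<Rightarrow> 'g bcube \<Rightarrow> bool" where
  "based_cube G Gl Ind c \<longleftrightarrow> fst c \<in> carrier G \<and> cubic G Gl Ind (snd c)"

definition flip_set :: "('g,'b) monoid_scheme \<Rightarrow> 'g set \<Rightarrow> 'g set \<Rightarrow> 'g set" where
  "flip_set G T S = (S - T) \<union> (\<lambda>t. inv\<^bsub>G\<^esub> t) ` T"

definition cube_rel :: "('g,'b) monoid_scheme \<Rightarrow> 'g bcube \<Rightarrow> 'g bcube \<Rightarrow> bool" where
  "cube_rel G c d \<longleftrightarrow> (\<exists>T \<subseteq> snd c. fst d = glide_prod G T \<otimes>\<^bsub>G\<^esub> fst c \<and> snd d = flip_set G T (snd c))"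

text \<open>The cube of the glide complex determined by a based cube: its equivalence class.\<close>
definition cube_of :: "('g,'b) monoid_scheme \<Rightarrow> 'g set \<Rightarrow> ('g \<times> 'g) set \<Rightarrow> 'g bcube \<Rightarrow> 'g bcube set" where
  "cube_of G Gl Ind c = {d. based_cube G Gl Ind d \<and> cube_rel G c d}"

definition cube_vertices :: "('g,'b) monoid_scheme \<Rightarrow> 'g bcube \<Rightarrow> 'g set" where
  "cube_vertices G c = {glide_prod G T \<otimes>\<^bsub>G\<^esub> fst c | T. T \<subseteq> snd c}"

definition glide_complex :: "('g,'b) monoid_scheme \<Rightarrow> 'g set \<Rightarrow> ('g \<times> 'g) set \<Rightarrow> 'g set \<Rightarrow> 'g bcube set set" where
  "glide_complex G Gl Ind D =
     {cube_of G Gl Ind c | c. based_cube G Gl Ind c \<and> cube_vertices G c \<subseteq> D}"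

text \<open>A cell of the link of the vertex A is a corner at A of a positive-dimensional
  cube C of X_D; corners of C are exactly its based representatives (B,S) \<in> C,
  the corner being at vertex B.  A k-cube gives a (k-1)-simplex.\<close>
definition link_cells :: "('g,'b) monoid_scheme \<Rightarrow> 'g set \<Rightarrow> ('g \<times> 'g) set \<Rightarrow> 'g set \<Rightarrow> 'g
    \<Rightarrow> ('g bcube set \<times> 'g bcube) set" where
  "link_cells G Gl Ind D A =
     {(C, (B, S)) | C B S. C \<in> glide_complex G Gl Ind D \<and> (B, S) \<in> C \<and> B = A \<and> S \<noteq> {}}"

definition link_dim :: "('g bcube set \<times> 'g bcube) \<Rightarrow> nat" where
  "link_dim c = card (snd (snd c)) - 1"

text \<open>Face relation in the link: the corner at A of the face (A,S') of the cube (A,S).\<close>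
definition link_face :: "('g,'b) monoid_scheme \<Rightarrow> 'g set \<Rightarrow> ('g \<times> 'g) set
    \<Rightarrow> ('g bcube set \<times> 'g bcube) \<Rightarrow> ('g bcube set \<times> 'g bcube) \<Rightarrow> bool" where
  "link_face G Gl Ind c d \<longleftrightarrow>
     fst (snd c) = fst (snd d) \<and> snd (snd c) \<subseteq> snd (snd d) \<and> fst c = cube_of G Gl Ind (snd c)"

definition link_vertset :: "('g,'b) monoid_scheme \<Rightarrow> 'g set \<Rightarrow> ('g \<times> 'g) set \<Rightarrow> 'g set \<Rightarrow> 'g
    \<Rightarrow> ('g bcube set \<times> 'g bcube) \<Rightarrow> ('g bcube set \<times> 'g bcube) set" where
  "link_vertset G Gl Ind D A c =
     {v \<in> link_cells G Gl Ind D A. link_dim v = 0 \<and> link_face G Gl Ind v c}"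

definition link_simplicial :: "('g,'b) monoid_scheme \<Rightarrow> 'g set \<Rightarrow> ('g \<times> 'g) set \<Rightarrow> 'g set \<Rightarrow> 'g \<Rightarrow> bool" where
  "link_simplicial G Gl Ind D A \<longleftrightarrow>
     (let L = link_cells G Gl Ind D A; V = link_vertset G Gl Ind D A in
       (\<forall>c\<in>L. card (V c) = link_dim c + 1) \<and> inj_on V L \<and>
       (\<forall>c\<in>L. \<forall>d\<in>L. V c \<inter> V d \<noteq> {} \<longrightarrow>
          (\<exists>e\<in>L. link_face G Gl Ind e c \<and> link_face G Gl Ind e d \<and> V e = V c \<inter> V d)))"

definition link_flag :: "('g,'b) monoid_scheme \<Rightarrow> 'g set \<Rightarrow> ('g \<times> 'g) set \<Rightarrow> 'g set \<Rightarrow> 'g \<Rightarrow> bool" where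
  "link_flag G Gl Ind D A \<longleftrightarrow>
     (let L = link_cells G Gl Ind D A; V = link_vertset G Gl Ind D A in
       \<forall>W. finite W \<and> W \<noteq> {} \<and> W \<subseteq> {v \<in> L. link_dim v = 0} \<and>
           (\<forall>v\<in>W. \<forall>w\<in>W. v \<noteq> w \<longrightarrow> (\<exists>e\<in>L. V e = {v, w}))
         \<longrightarrow> (\<exists>c\<in>L. V c = W))"

text \<open>The 0-cells of X_D are the elements of D (0-cubes (A,{}) ).\<close>
definition nonpositively_curved :: "('g,'b) monoid_scheme \<Rightarrow> 'g set \<Rightarrow> ('g \<times> 'g) set \<Rightarrow> 'g set \<Rightarrow> bool" where
  "nonpositively_curved G Gl Ind D \<longleftrightarrow>
     (\<forall>A\<in>D. link_simplicial G Gl Ind D A \<and> link_flag G Gl Ind D A)"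

definition regular :: "('g,'b) monoid_scheme \<Rightarrow> 'g set \<Rightarrow> ('g \<times> 'g) set \<Rightarrow> 'g set \<Rightarrow> bool" where
  "regular G Gl Ind D \<longleftrightarrow>
     (\<forall>A\<in>D. \<forall>S. pre_cubic G Gl Ind S \<and> (\<forall>s\<in>S. s \<otimes>\<^bsub>G\<^esub> A \<in> D) \<and>
        (\<forall>s\<in>S. \<forall>t\<in>S. s \<noteq> t \<longrightarrow> s \<otimes>\<^bsub>G\<^esub> t \<otimes>\<^bsub>G\<^esub> A \<in> D)
        \<longrightarrow> cubic G Gl Ind S)"

definition cube_condition :: "('g,'b) monoid_scheme \<Rightarrow> 'g set \<Rightarrow> ('g \<times> 'g) set \<Rightarrow> 'g set \<Rightarrow> bool" where
  "cube_condition G Gl Ind D \<longleftrightarrow>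
     (\<forall>A\<in>D. \<forall>s1 s2 s3. (s1, s2) \<in> Ind \<and> (s1, s3) \<in> Ind \<and> (s2, s3) \<in> Ind \<and>
        s1 \<otimes>\<^bsub>G\<^esub> A \<in> D \<and> s2 \<otimes>\<^bsub>G\<^esub> A \<in> D \<and> s3 \<otimes>\<^bsub>G\<^esub> A \<in> D \<and>
        s1 \<otimes>\<^bsub>G\<^esub> s2 \<otimes>\<^bsub>G\<^esub> A \<in> D \<and> s1 \<otimes>\<^bsub>G\<^esub> s3 \<otimes>\<^bsub>G\<^esub> A \<in> D \<and>
        s2 \<otimes>\<^bsub>G\<^esub> s3 \<otimes>\<^bsub>G\<^esub> A \<in> D
        \<longrightarrow> s1 \<otimes>\<^bsub>G\<^esub> s2 \<otimes>\<^bsub>G\<^esub> s3 \<otimes>\<^bsub>G\<^esub> A \<in> D)"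

end

theory Submission
  imports Defs
begin

text \<open>
  The proof is organised in four steps.
  (1) In any group, the product [X] of a finite set of pairwise commuting elements does not
      depend on the enumeration; it is multiplicative on disjoint unions and commutes
      with inversion.
  (2) For a gliding system, flipping glides of a pre-cubic set composes like the symmetric
      difference of the flipped sets.  Hence the identification of based cubes is an
      equivalence relation, and a cube of X_D containing the based cube (A,S) is the class
      of (A,S), with vertices the products [T]A for T \<subseteq> S.
  (3) Consequently the link of a vertex A \<in> D is purely combinatorial: its cells are the
      corners at A of the cubes (A,S) of X_D with S nonempty, its vertices correspond to
      the edges (A,{s}).  The link is therefore always simplicial, and it is flag iff every
      finite nonempty set of glides whose elements and pairs span cubes at A spans a cube.
  (4) This flag condition at all vertices is equivalent to regularity plus the cube
      condition; for the harder direction, membership in D of all vertices [T]A follows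
      from the cube condition by induction on the size of T.
\<close>

context group
begin

definition commuting :: "'a set \<Rightarrow> bool" where
  "commuting X \<longleftrightarrow> X \<subseteq> carrier G \<and> (\<forall>x\<in>X. \<forall>y\<in>X. x \<otimes> y = y \<otimes> x)"

lemma commutingD:
  assumes "commuting X"
  shows commuting_carrier: "X \<subseteq> carrier G"
    and commuting_commute: "x \<in> X \<Longrightarrow> y \<in> X \<Longrightarrow> x \<otimes> y = y \<otimes> x"
  using assms unfolding commuting_def by blast+

lemma commuting_subset: "commuting X \<Longrightarrow> Y \<subseteq> X \<Longrightarrow> commuting Y"
  unfolding commuting_def by blast

lemma commuting_with_inverses:
  assumes "commuting X" shows "commuting (X \<union> (\<lambda>x. inv x) ` X)"
proof -
  have X: "X \<subseteq> carrier G" and comm: "\<And>x y. x \<in> X \<Longrightarrow> y \<in> X \<Longrightarrow> x \<otimes> y = y \<otimes> x"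
    using assms unfolding commuting_def by auto
  have mixed: "x \<otimes> inv y = inv y \<otimes> x" if "x \<in> X" "y \<in> X" for x y
  proof -
    have c: "x \<in> carrier G" "y \<in> carrier G" using that X by auto
    have "x \<otimes> inv y = inv y \<otimes> (y \<otimes> x) \<otimes> inv y" using c by (simp add: m_assoc[symmetric])
    also have "\<dots> = inv y \<otimes> (x \<otimes> y) \<otimes> inv y" using comm[OF that] by simp
    also have "\<dots> = inv y \<otimes> x" using c by (simp add: m_assoc)
    finally show ?thesis .
  qed
  have inverses: "inv x \<otimes> inv y = inv y \<otimes> inv x" if "x \<in> X" "y \<in> X" for x y
    using that X comm[OF that] by (metis inv_mult_group subsetD)
  show ?thesis unfolding commuting_def
    using X mixed inverses comm by auto
qed

definition list_prod :: "'a list \<Rightarrow> 'a" where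
  "list_prod xs = foldr (\<lambda>x y. x \<otimes> y) xs \<one>"

lemma list_prod_Nil [simp]: "list_prod [] = \<one>"
  and list_prod_Cons [simp]: "list_prod (x # xs) = x \<otimes> list_prod xs"
  by (simp_all add: list_prod_def)

lemma list_prod_closed [simp]: "set xs \<subseteq> carrier G \<Longrightarrow> list_prod xs \<in> carrier G"
  by (induction xs) auto

lemma list_prod_append:
  "set xs \<subseteq> carrier G \<Longrightarrow> set ys \<subseteq> carrier G \<Longrightarrow> list_prod (xs @ ys) = list_prod xs \<otimes> list_prod ys"
  by (induction xs) (auto simp: m_assoc)

lemma list_prod_remove1:
  assumes "x \<in> set ys" and "commuting (set ys)"
  shows "list_prod ys = x \<otimes> list_prod (remove1 x ys)"
  using assms
proof (induction ys)
  case (Cons y ys)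
  show ?case
  proof (cases "x = y")
    case False
    have c: "x \<in> carrier G" "y \<in> carrier G" "set (remove1 x ys) \<subseteq> carrier G"
      using Cons.prems commuting_carrier set_remove1_subset by fastforce+
    have xy: "y \<otimes> x = x \<otimes> y" using Cons.prems commuting_commute by simp
    have IH: "list_prod ys = x \<otimes> list_prod (remove1 x ys)"
      using Cons False commuting_subset by (metis set_ConsD set_subset_Cons)
    have "list_prod (y # ys) = (y \<otimes> x) \<otimes> list_prod (remove1 x ys)"
      using IH c by (simp add: m_assoc)
    also have "\<dots> = x \<otimes> list_prod (remove1 x (y # ys))"
      using xy c False by (simp add: m_assoc)
    finally show ?thesis .
  qed simp
qed simp

lemma list_prod_perm:
  assumes "distinct xs" "distinct ys" "set xs = set ys" "commuting (set ys)"
  shows "list_prod xs = list_prod ys"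
  using assms
proof (induction xs arbitrary: ys)
  case (Cons x xs)
  have "set xs = set (remove1 x ys)" using Cons.prems by (auto simp: set_remove1_eq)
  moreover have "commuting (set (remove1 x ys))"
    using Cons.prems(4) commuting_subset by (metis set_remove1_subset)
  ultimately have "list_prod xs = list_prod (remove1 x ys)"
    using Cons.IH[of "remove1 x ys"] Cons.prems(1,2) by simp
  moreover have "x \<in> set ys" using Cons.prems(3) by auto
  ultimately show ?case using list_prod_remove1[of x ys] Cons.prems(4) by simp
qed simp

lemma glide_prod_enumeration:
  assumes "finite X"
  obtains xs where "distinct xs" "set xs = X" "glide_prod G X = list_prod xs"
proof -
  let ?P = "\<lambda>p. \<exists>xs. distinct xs \<and> set xs = X \<and> p = list_prod xs"
  obtain xs where "distinct xs" "set xs = X" using assms finite_distinct_list by blast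
  then have "?P (list_prod xs)" by blast
  then have "?P (glide_prod G X)"
    unfolding glide_prod_def list_prod_def[symmetric] by (rule someI)
  then show ?thesis using that by blast
qed

lemma glide_prod_list:
  assumes "distinct xs" "commuting (set xs)"
  shows "glide_prod G (set xs) = list_prod xs"
  using glide_prod_enumeration[of "set xs"] list_prod_perm assms by (metis finite_set)

lemma glide_prod_empty [simp]: "glide_prod G {} = \<one>"
  using glide_prod_list[of "[]"] commuting_def by simp

lemma glide_prod_singleton [simp]: "x \<in> carrier G \<Longrightarrow> glide_prod G {x} = x"
  using glide_prod_list[of "[x]"] commuting_def by simp

lemma glide_prod_closed:
  assumes "finite X" "X \<subseteq> carrier G" shows "glide_prod G X \<in> carrier G"
  using glide_prod_enumeration[OF assms(1)] assms(2) by (metis list_prod_closed)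

lemma glide_prod_union:
  assumes "finite X" "finite Y" "X \<inter> Y = {}" "commuting (X \<union> Y)"
  shows "glide_prod G (X \<union> Y) = glide_prod G X \<otimes> glide_prod G Y"
proof -
  obtain xs ys where xs: "distinct xs" "set xs = X" and ys: "distinct ys" "set ys = Y"
    using assms(1,2) finite_distinct_list by metis
  have "commuting X" "commuting Y" using assms(4) commuting_subset by blast+
  moreover have "X \<union> Y \<subseteq> carrier G" using assms(4) commuting_carrier by blast
  ultimately show ?thesis
    using glide_prod_list[of "xs @ ys"] glide_prod_list[of xs] glide_prod_list[of ys]
      xs ys assms(3,4) by (simp add: list_prod_append)
qed

lemma glide_prod_insert:
  assumes "finite X" "x \<notin> X" "commuting (insert x X)"
  shows "glide_prod G (insert x X) = x \<otimes> glide_prod G X"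
  using glide_prod_union[of "{x}" X] commuting_carrier[OF assms(3)] assms by simp

lemma glide_prod_inv:
  assumes "finite X" "commuting X"
  shows "glide_prod G ((\<lambda>x. inv x) ` X) = inv (glide_prod G X)"
  using assms
proof (induction X rule: finite_induct)
  case (insert x X)
  have x: "x \<in> carrier G" and X: "X \<subseteq> carrier G"
    using commuting_carrier[OF insert.prems] by auto
  have comm_X: "commuting X" using commuting_subset[OF insert.prems subset_insertI] .
  have "inv x \<notin> (\<lambda>x. inv x) ` X"
    using insert.hyps(2) x X inv_inj by (auto dest: inj_onD)
  moreover have "insert (inv x) ((\<lambda>x. inv x) ` X) \<subseteq> insert x X \<union> (\<lambda>x. inv x) ` insert x X"
    by auto
  then have "commuting (insert (inv x) ((\<lambda>x. inv x) ` X))"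
    by (rule commuting_subset[OF commuting_with_inverses[OF insert.prems]])
  ultimately have "glide_prod G ((\<lambda>x. inv x) ` insert x X) = inv x \<otimes> inv (glide_prod G X)"
    using glide_prod_insert[of "(\<lambda>x. inv x) ` X" "inv x"] insert.IH[OF comm_X] insert.hyps(1)
    by simp
  also have "\<dots> = inv (glide_prod G X \<otimes> x)"
    using x X insert.hyps(1) by (simp add: inv_mult_group glide_prod_closed)
  also have "glide_prod G X \<otimes> x = glide_prod G (insert x X)"
    using glide_prod_union[of X "{x}"] insert.hyps insert.prems x by simp
  finally show ?case .
next
  case empty
  show ?case by simp
qed

end

locale gliding = group G for G :: "('g, 'b) monoid_scheme" (structure) +
  fixes Gl :: "'g set" and Ind :: "('g \<times> 'g) set"
  assumes gliding_system: "gliding_system G Gl Ind"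
begin

lemma glide_carrier: "s \<in> Gl \<Longrightarrow> s \<in> carrier G"
  and glide_not_one: "s \<in> Gl \<Longrightarrow> s \<noteq> \<one>"
  using gliding_system unfolding gliding_system_def by auto

lemma independentD:
  assumes "(s, t) \<in> Ind"
  shows independent_glides: "s \<in> Gl" "t \<in> Gl"
    and independent_sym: "(t, s) \<in> Ind"
    and independent_commute: "s \<otimes> t = t \<otimes> s"
    and independent_product: "s \<otimes> t \<noteq> \<one>"
    and independent_inv: "(inv s, t) \<in> Ind"
  using assms gliding_system unfolding gliding_system_def by blast+

text \<open>Independent glides are distinct and not mutually inverse: otherwise the product
  of one of the independent pairs (s,t), (s^-1,t) would be trivial.\<close>
lemma independent_distinct:
  assumes "(s, t) \<in> Ind"
  shows "s \<noteq> t" and "s \<noteq> inv t"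
proof -
  have c: "s \<in> carrier G" "t \<in> carrier G"
    using glide_carrier independent_glides[OF assms] by auto
  show "s \<noteq> t" using independent_product[OF independent_inv[OF assms]] c by auto
  show "s \<noteq> inv t" using independent_product[OF assms] c by auto
qed

lemma pre_cubicD:
  assumes "pre_cubic G Gl Ind S"
  shows pre_cubic_finite: "finite S"
    and pre_cubic_glides: "S \<subseteq> Gl"
    and pre_cubic_independent: "s \<in> S \<Longrightarrow> t \<in> S \<Longrightarrow> s \<noteq> t \<Longrightarrow> (s, t) \<in> Ind"
  using assms unfolding pre_cubic_def by blast+

lemma pre_cubic_carrier: "pre_cubic G Gl Ind S \<Longrightarrow> S \<subseteq> carrier G"
  using pre_cubic_glides glide_carrier by blast

lemma pre_cubic_inv_eq:
  assumes "pre_cubic G Gl Ind S" "s \<in> S" "t \<in> S" "s = inv t"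
  shows "s = t"
  using assms independent_distinct(2) pre_cubic_independent by blast

lemma pre_cubic_commuting:
  assumes "pre_cubic G Gl Ind S"
  shows "commuting (S \<union> (\<lambda>x. inv x) ` S)"
proof (rule commuting_with_inverses)
  have "s \<otimes> t = t \<otimes> s" if "s \<in> S" "t \<in> S" for s t
    using pre_cubic_independent[OF assms that] independent_commute by (cases "s = t") auto
  then show "commuting S" unfolding commuting_def using pre_cubic_carrier[OF assms] by blast
qed

lemma pre_cubic_glide_prod_closed:
  assumes "pre_cubic G Gl Ind S" "X \<subseteq> S \<union> (\<lambda>x. inv x) ` S"
  shows "glide_prod G X \<in> carrier G"
proof (rule glide_prod_closed)
  show "finite X" using assms pre_cubic_finite finite_subset by blast
  show "X \<subseteq> carrier G" using assms pre_cubic_carrier by blast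
qed

lemma pre_cubic_glide_prod_insert:
  assumes S: "pre_cubic G Gl Ind S" and sX: "insert s X \<subseteq> S" "s \<notin> X"
  shows "glide_prod G (insert s X) = s \<otimes> glide_prod G X"
proof -
  have "X \<subseteq> S" using sX(1) by simp
  then have "finite X" using pre_cubic_finite[OF S] by (rule finite_subset)
  moreover have "insert s X \<subseteq> S \<union> (\<lambda>x. inv x) ` S" using sX(1) by blast
  then have "commuting (insert s X)" by (rule commuting_subset[OF pre_cubic_commuting[OF S]])
  ultimately show ?thesis using glide_prod_insert sX(2) by blast
qed

lemma pre_cubic_glide_prod_union:
  assumes S: "pre_cubic G Gl Ind S" and "X \<subseteq> S" "Y \<subseteq> S" "X \<inter> Y = {}"
  shows "glide_prod G (X \<union> Y) = glide_prod G X \<otimes> glide_prod G Y"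
proof (rule glide_prod_union)
  show "finite X" "finite Y"
    using assms(2,3) pre_cubic_finite[OF S] finite_subset by auto
  have "X \<union> Y \<subseteq> S \<union> (\<lambda>x. inv x) ` S" using assms(2,3) by blast
  then show "commuting (X \<union> Y)" by (rule commuting_subset[OF pre_cubic_commuting[OF S]])
qed fact

lemma cubic_subset: "cubic G Gl Ind S \<Longrightarrow> S' \<subseteq> S \<Longrightarrow> cubic G Gl Ind S'"
  unfolding cubic_def pre_cubic_def by (meson Pow_mono inj_on_subset finite_subset subset_iff)

lemma pre_cubic_pair: "(s, t) \<in> Ind \<Longrightarrow> pre_cubic G Gl Ind {s, t}"
  unfolding pre_cubic_def using independent_glides independent_sym by auto

lemma glide_prod_pair:
  assumes "(s, t) \<in> Ind" shows "glide_prod G {s, t} = s \<otimes> t"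
  using pre_cubic_glide_prod_insert[OF pre_cubic_pair[OF assms], of s "{t}"]
    independent_distinct(1)[OF assms] glide_carrier independent_glides[OF assms] by simp

lemma cubic_singleton:
  assumes "s \<in> Gl" shows "cubic G Gl Ind {s}"
proof -
  have "Pow {s} = {{}, {s}}" by auto
  then show ?thesis
    using assms glide_carrier glide_not_one unfolding cubic_def pre_cubic_def by auto
qed

lemma cubic_pair:
  assumes st: "(s, t) \<in> Ind" shows "cubic G Gl Ind {s, t}"
proof -
  have c: "s \<in> carrier G" "t \<in> carrier G" "s \<noteq> \<one>" "t \<noteq> \<one>"
    using independent_glides[OF st] glide_carrier glide_not_one by auto
  have "Pow {s, t} = {{}, {s}, {t}, {s, t}}" by auto
  moreover have "s \<noteq> t" "s \<otimes> t \<noteq> \<one>" using independent_distinct[OF st] independent_product[OF st] by auto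
  moreover have "s \<otimes> t \<noteq> s" "s \<otimes> t \<noteq> t" using c by auto
  ultimately show ?thesis
    using pre_cubic_pair[OF st] glide_prod_pair[OF st] c unfolding cubic_def by (auto simp: inj_on_def)
qed

text \<open>Flipping the glides in T: on a set S with T \<subseteq> S, the flipped set
  (S - T) \<union> T^-1 is the image of S under this map.\<close>
definition flip_map :: "'g set \<Rightarrow> 'g \<Rightarrow> 'g" where
  "flip_map T s = (if s \<in> T then inv s else s)"

lemma flip_set_image: "T \<subseteq> S \<Longrightarrow> flip_set G T S = flip_map T ` S"
  unfolding flip_set_def flip_map_def by auto

lemma flip_set_of_image:
  assumes "U \<subseteq> f ` S"
  shows "flip_set G U (f ` S) = (\<lambda>s. if f s \<in> U then inv (f s) else f s) ` S"
  using assms unfolding flip_set_def by auto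

text \<open>On a pre-cubic set, flipping is injective, since no glide is the inverse of another.\<close>
lemma flip_map_inj:
  assumes "pre_cubic G Gl Ind S" shows "inj_on (flip_map T) S"
proof (rule inj_onI)
  fix s t assume st: "s \<in> S" "t \<in> S" "flip_map T s = flip_map T t"
  have c: "s \<in> carrier G" "t \<in> carrier G" using st pre_cubic_carrier[OF assms] by auto
  have "inv s = inv t \<Longrightarrow> s = t" using c inv_inj by (blast dest: inj_onD)
  then show "s = t"
    using st pre_cubic_inv_eq[OF assms st(1,2)] pre_cubic_inv_eq[OF assms st(2,1)]
    unfolding flip_map_def by (simp split: if_splits)
qed

lemma flip_set_flip_set:
  assumes S: "pre_cubic G Gl Ind S" and "T \<subseteq> S" "U \<subseteq> S"
  shows "flip_set G (flip_map T ` U) (flip_set G T S) = flip_set G (sym_diff T U) S"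
proof -
  have inU: "flip_map T s \<in> flip_map T ` U \<longleftrightarrow> s \<in> U" if "s \<in> S" for s
    by (rule inj_on_image_mem_iff[OF flip_map_inj[OF S] that assms(3)])
  have flip_twice: "(if flip_map T s \<in> flip_map T ` U then inv (flip_map T s) else flip_map T s)
      = flip_map (sym_diff T U) s" if "s \<in> S" for s
  proof -
    have "s \<in> carrier G" using that pre_cubic_carrier[OF S] by blast
    then show ?thesis
      unfolding inU[OF that] by (cases "s \<in> T"; cases "s \<in> U") (simp_all add: flip_map_def)
  qed
  have "flip_set G (flip_map T ` U) (flip_set G T S) = flip_set G (flip_map T ` U) (flip_map T ` S)"
    using flip_set_image[OF assms(2)] by simp
  also have "\<dots> = (\<lambda>s. if flip_map T s \<in> flip_map T ` U then inv (flip_map T s) else flip_map T s) ` S"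
    using assms(3) by (intro flip_set_of_image image_mono)
  also have "\<dots> = flip_map (sym_diff T U) ` S"
    using flip_twice by (rule image_cong[OF refl])
  also have "\<dots> = flip_set G (sym_diff T U) S"
    using assms(2,3) by (intro flip_set_image[symmetric]) blast
  finally show ?thesis .
qed

lemma flip_map_image: "flip_map T ` U = (U - T) \<union> (\<lambda>x. inv x) ` (T \<inter> U)"
  unfolding flip_map_def by force

lemma glide_prod_flip:
  assumes S: "pre_cubic G Gl Ind S" and "T \<subseteq> S" "U \<subseteq> S"
  shows "glide_prod G (flip_map T ` U) \<otimes> glide_prod G T = glide_prod G (sym_diff T U)"
proof -
  let ?i = "\<lambda>x. inv x"
  have comm: "commuting X" if "X \<subseteq> S \<union> ?i ` S" for X
    using commuting_subset[OF pre_cubic_commuting[OF S] that] .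
  have fin: "finite X" if "X \<subseteq> S" for X
    using pre_cubic_finite[OF S] that finite_subset by blast
  have disj: "(U - T) \<inter> ?i ` (T \<inter> U) = {}"
  proof (intro equals0I)
    fix x assume "x \<in> (U - T) \<inter> ?i ` (T \<inter> U)"
    then obtain t where xt: "x \<in> U" "x \<notin> T" "t \<in> T" "x = inv t" by blast
    then have "x = t" using pre_cubic_inv_eq[OF S, of x t] assms(2,3) by blast
    then show False using xt by simp
  qed
  have "glide_prod G (flip_map T ` U) = glide_prod G ((U - T) \<union> ?i ` (T \<inter> U))"
    by (simp only: flip_map_image)
  also have "\<dots> = glide_prod G (U - T) \<otimes> glide_prod G (?i ` (T \<inter> U))"
    using assms(3) by (intro glide_prod_union disj fin comm finite_imageI) auto
  also have "glide_prod G (?i ` (T \<inter> U)) = inv (glide_prod G (T \<inter> U))"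
    using assms(3) by (intro glide_prod_inv fin comm) auto
  finally have flipped: "glide_prod G (flip_map T ` U)
      = glide_prod G (U - T) \<otimes> inv (glide_prod G (T \<inter> U))" .
  have "glide_prod G ((T \<inter> U) \<union> (T - U)) = glide_prod G (T \<inter> U) \<otimes> glide_prod G (T - U)"
    using assms(2) by (intro glide_prod_union fin comm) auto
  then have split_T: "glide_prod G T = glide_prod G (T \<inter> U) \<otimes> glide_prod G (T - U)"
    by (simp only: Int_Diff_Un)
  have split_sym_diff: "glide_prod G (sym_diff T U) = glide_prod G (U - T) \<otimes> glide_prod G (T - U)"
    using assms(2,3) by (subst Un_commute, intro glide_prod_union fin comm) auto
  have c: "glide_prod G (U - T) \<in> carrier G" "glide_prod G (T \<inter> U) \<in> carrier G"
    "glide_prod G (T - U) \<in> carrier G"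
    using assms(2,3) by (auto intro!: pre_cubic_glide_prod_closed[OF S])
  then have "inv (glide_prod G (T \<inter> U)) \<otimes> (glide_prod G (T \<inter> U) \<otimes> glide_prod G (T - U))
      = glide_prod G (T - U)" by (simp add: m_assoc[symmetric])
  then show ?thesis unfolding flipped split_T split_sym_diff using c by (simp add: m_assoc)
qed

lemma based_cubeD:
  assumes "based_cube G Gl Ind a"
  shows "fst a \<in> carrier G" "pre_cubic G Gl Ind (snd a)"
  using assms unfolding based_cube_def cubic_def by auto

lemma cube_rel_trans:
  assumes a: "based_cube G Gl Ind a" and ab: "cube_rel G a b" and bc: "cube_rel G b c"
  shows "cube_rel G a c"
proof -
  note A = based_cubeD[OF a]
  obtain T where T: "T \<subseteq> snd a" "fst b = glide_prod G T \<otimes> fst a" "snd b = flip_set G T (snd a)"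
    using ab unfolding cube_rel_def by blast
  obtain U where U: "U \<subseteq> snd b" "fst c = glide_prod G U \<otimes> fst b" "snd c = flip_set G U (snd b)"
    using bc unfolding cube_rel_def by blast
  obtain U' where U': "U' \<subseteq> snd a" "U = flip_map T ` U'"
    using U(1) T(1,3) flip_set_image by (metis subset_image_iff)
  have "glide_prod G U \<in> carrier G" "glide_prod G T \<in> carrier G"
    using T(1) U'(1) unfolding U'(2) flip_map_image
    by (auto intro!: pre_cubic_glide_prod_closed[OF A(2)])
  then have "fst c = (glide_prod G U \<otimes> glide_prod G T) \<otimes> fst a"
    using U(2) T(2) A(1) by (simp add: m_assoc)
  then have "fst c = glide_prod G (sym_diff T U') \<otimes> fst a"
    using glide_prod_flip[OF A(2) T(1) U'(1)] U'(2) by simp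
  moreover have "snd c = flip_set G (sym_diff T U') (snd a)"
    using flip_set_flip_set[OF A(2) T(1) U'(1)] U(3) T(3) U'(2) by simp
  moreover have "sym_diff T U' \<subseteq> snd a" using T(1) U'(1) by blast
  ultimately show ?thesis unfolding cube_rel_def by blast
qed

lemma cube_rel_sym:
  assumes a: "based_cube G Gl Ind a" and ab: "cube_rel G a b"
  shows "cube_rel G b a"
proof -
  note A = based_cubeD[OF a]
  obtain T where T: "T \<subseteq> snd a" "fst b = glide_prod G T \<otimes> fst a" "snd b = flip_set G T (snd a)"
    using ab unfolding cube_rel_def by blast
  let ?U = "flip_map T ` T"
  have "glide_prod G ?U \<in> carrier G" "glide_prod G T \<in> carrier G"
    using T(1) unfolding flip_map_image by (auto intro!: pre_cubic_glide_prod_closed[OF A(2)])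
  then have "glide_prod G ?U \<otimes> fst b = (glide_prod G ?U \<otimes> glide_prod G T) \<otimes> fst a"
    using T(2) A(1) by (simp add: m_assoc)
  then have "fst a = glide_prod G ?U \<otimes> fst b"
    using glide_prod_flip[OF A(2) T(1) T(1)] A(1) by simp
  moreover have "snd a = flip_set G ?U (snd b)"
    using flip_set_flip_set[OF A(2) T(1) T(1)] T(3) by (simp add: flip_set_def)
  moreover have "?U \<subseteq> snd b" using T(1,3) flip_set_image by blast
  ultimately show ?thesis unfolding cube_rel_def by blast
qed

lemma cube_of_eq:
  assumes a: "based_cube G Gl Ind a" and b: "based_cube G Gl Ind b" and ab: "cube_rel G a b"
  shows "cube_of G Gl Ind b = cube_of G Gl Ind a"
  unfolding cube_of_def
  using cube_rel_trans[OF a ab] cube_rel_trans[OF b cube_rel_sym[OF a ab]] by blast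

text \<open>\<dots> and have the same vertices (one inclusion suffices by symmetry).\<close>
lemma cube_vertices_mono:
  assumes a: "based_cube G Gl Ind a" and ab: "cube_rel G a b"
  shows "cube_vertices G b \<subseteq> cube_vertices G a"
proof
  fix x assume "x \<in> cube_vertices G b"
  then obtain U where U: "U \<subseteq> snd b" "x = glide_prod G U \<otimes> fst b"
    unfolding cube_vertices_def by blast
  then have "cube_rel G b (x, flip_set G U (snd b))" unfolding cube_rel_def by auto
  then have "cube_rel G a (x, flip_set G U (snd b))" by (rule cube_rel_trans[OF a ab])
  then obtain V where "V \<subseteq> snd a" "x = glide_prod G V \<otimes> fst a"
    unfolding cube_rel_def by auto
  then show "x \<in> cube_vertices G a" unfolding cube_vertices_def by blast
qed

lemma in_own_cube:
  assumes "based_cube G Gl Ind c" shows "c \<in> cube_of G Gl Ind c"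
proof -
  have "cube_rel G c c"
    unfolding cube_rel_def using based_cubeD(1)[OF assms] by (intro exI[of _ "{}"]) (simp add: flip_set_def)
  then show ?thesis unfolding cube_of_def using assms by blast
qed

end

locale glide_subcomplex = gliding G Gl Ind
  for G :: "('g, 'b) monoid_scheme" (structure) and Gl Ind +
  fixes D :: "'g set"
  assumes D_carrier: "D \<subseteq> carrier G"
begin

definition spans_cube :: "'g \<Rightarrow> 'g set \<Rightarrow> bool" where
  "spans_cube A S \<longleftrightarrow> cubic G Gl Ind S \<and> (\<forall>T\<subseteq>S. glide_prod G T \<otimes> A \<in> D)"

lemma spans_cube_subset: "spans_cube A S \<Longrightarrow> S' \<subseteq> S \<Longrightarrow> spans_cube A S'"
  unfolding spans_cube_def using cubic_subset by blast

lemma spans_cube_finite: "spans_cube A S \<Longrightarrow> finite S"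
  unfolding spans_cube_def cubic_def using pre_cubic_finite by blast

lemma spans_cube_iff_vertices: "spans_cube A S \<longleftrightarrow> cubic G Gl Ind S \<and> cube_vertices G (A, S) \<subseteq> D"
  unfolding spans_cube_def cube_vertices_def by auto

lemma spans_cube_based: "A \<in> D \<Longrightarrow> spans_cube A S \<Longrightarrow> based_cube G Gl Ind (A, S)"
  unfolding spans_cube_def based_cube_def using D_carrier by auto

text \<open>The corner at A of the cube (A,S): a cell of the link of A (when S is nonempty).\<close>
definition corner :: "'g \<Rightarrow> 'g set \<Rightarrow> 'g bcube set \<times> 'g bcube" where
  "corner A S = (cube_of G Gl Ind (A, S), (A, S))"

text \<open>The cells of the link of A are exactly the corners of the cubes (A,S) of X_D with
  S nonempty.  A cube of X_D containing (A,S) is its class and has the same vertices.\<close>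
lemma link_cells_iff:
  assumes A: "A \<in> D"
  shows "c \<in> link_cells G Gl Ind D A \<longleftrightarrow> (\<exists>S. S \<noteq> {} \<and> spans_cube A S \<and> c = corner A S)"
proof
  assume "c \<in> link_cells G Gl Ind D A"
  then obtain C S where c: "c = (C, (A, S))" "C \<in> glide_complex G Gl Ind D" "(A, S) \<in> C" "S \<noteq> {}"
    unfolding link_cells_def by blast
  then obtain c0 where c0: "C = cube_of G Gl Ind c0" "based_cube G Gl Ind c0" "cube_vertices G c0 \<subseteq> D"
    unfolding glide_complex_def by blast
  have AS: "based_cube G Gl Ind (A, S)" "cube_rel G c0 (A, S)"
    using c(3) c0(1) unfolding cube_of_def by auto
  have "C = cube_of G Gl Ind (A, S)" using cube_of_eq[OF c0(2) AS] c0(1) by simp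
  moreover have "spans_cube A S"
    using cube_vertices_mono[OF c0(2) AS(2)] c0(3) AS(1)
    unfolding spans_cube_iff_vertices based_cube_def by auto
  ultimately show "\<exists>S. S \<noteq> {} \<and> spans_cube A S \<and> c = corner A S"
    using c unfolding corner_def by blast
next
  assume "\<exists>S. S \<noteq> {} \<and> spans_cube A S \<and> c = corner A S"
  then obtain S where S: "S \<noteq> {}" "spans_cube A S" "c = corner A S" by blast
  have "cube_of G Gl Ind (A, S) \<in> glide_complex G Gl Ind D"
    using spans_cube_based[OF A S(2)] S(2) unfolding glide_complex_def spans_cube_iff_vertices by blast
  then show "c \<in> link_cells G Gl Ind D A"
    using S in_own_cube[OF spans_cube_based[OF A S(2)]] unfolding link_cells_def corner_def by blast
qed

lemma corner_eq_iff [simp]: "corner A S = corner A' S' \<longleftrightarrow> A = A' \<and> S = S'"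
  unfolding corner_def by auto

lemma inj_corner_vertex: "inj (\<lambda>s. corner A {s})"
  by (rule injI) simp

lemma link_dim_corner [simp]: "link_dim (corner A S) = card S - 1"
  unfolding link_dim_def corner_def by simp

lemma link_vertices:
  assumes A: "A \<in> D"
  shows "{v \<in> link_cells G Gl Ind D A. link_dim v = 0} = (\<lambda>s. corner A {s}) ` {s. spans_cube A {s}}"
proof -
  have singleton: "\<exists>s. S = {s}" if "S \<noteq> {}" "spans_cube A S" "card S - 1 = 0" for S
  proof -
    have "finite S" using that spans_cube_finite by blast
    then have "card S \<noteq> 0" using that by simp
    then have "card S = 1" using that by arith
    then show ?thesis by (rule card_1_singletonE) blast
  qed
  show ?thesis
  proof (intro equalityI subsetI)
    fix v assume "v \<in> {v \<in> link_cells G Gl Ind D A. link_dim v = 0}"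
    then have v: "v \<in> link_cells G Gl Ind D A" "link_dim v = 0" by auto
    then obtain S where S: "S \<noteq> {}" "spans_cube A S" "v = corner A S"
      unfolding link_cells_iff[OF A] by blast
    then obtain s where "S = {s}" using singleton v(2) by auto
    then show "v \<in> (\<lambda>s. corner A {s}) ` {s. spans_cube A {s}}" using S by blast
  next
    fix v assume "v \<in> (\<lambda>s. corner A {s}) ` {s. spans_cube A {s}}"
    then show "v \<in> {v \<in> link_cells G Gl Ind D A. link_dim v = 0}"
      unfolding link_cells_iff[OF A] by auto
  qed
qed

lemma link_vertset_corner:
  assumes A: "A \<in> D" and S: "S \<noteq> {}" "spans_cube A S"
  shows "link_vertset G Gl Ind D A (corner A S) = (\<lambda>s. corner A {s}) ` S"
proof -
  have face: "link_face G Gl Ind (corner A {s}) (corner A S) \<longleftrightarrow> s \<in> S" for s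
    unfolding link_face_def corner_def by simp
  have "link_vertset G Gl Ind D A (corner A S)
      = {v \<in> (\<lambda>s. corner A {s}) ` {s. spans_cube A {s}}. link_face G Gl Ind v (corner A S)}"
    unfolding link_vertset_def link_vertices[OF A, symmetric] by blast
  also have "\<dots> = (\<lambda>s. corner A {s}) ` S"
    using face spans_cube_subset[OF S(2)] by auto
  finally show ?thesis .
qed

lemma link_cell_spanned_iff:
  assumes A: "A \<in> D"
  shows "(\<exists>c\<in>link_cells G Gl Ind D A. link_vertset G Gl Ind D A c = (\<lambda>s. corner A {s}) ` S)
    \<longleftrightarrow> S \<noteq> {} \<and> spans_cube A S"
proof
  assume "\<exists>c\<in>link_cells G Gl Ind D A. link_vertset G Gl Ind D A c = (\<lambda>s. corner A {s}) ` S"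
  then obtain c where c: "c \<in> link_cells G Gl Ind D A"
    and vert: "link_vertset G Gl Ind D A c = (\<lambda>s. corner A {s}) ` S" by blast
  obtain S' where S': "S' \<noteq> {}" "spans_cube A S'" "c = corner A S'"
    using c unfolding link_cells_iff[OF A] by blast
  have "(\<lambda>s. corner A {s}) ` S' = (\<lambda>s. corner A {s}) ` S"
    using vert link_vertset_corner[OF A S'(1,2)] S'(3) by simp
  then have "S' = S" using inj_corner_vertex by (simp add: inj_image_eq_iff)
  then show "S \<noteq> {} \<and> spans_cube A S" using S' by simp
next
  assume S: "S \<noteq> {} \<and> spans_cube A S"
  show "\<exists>c\<in>link_cells G Gl Ind D A. link_vertset G Gl Ind D A c = (\<lambda>s. corner A {s}) ` S"
  proof
    show "corner A S \<in> link_cells G Gl Ind D A" unfolding link_cells_iff[OF A] using S by blast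
    show "link_vertset G Gl Ind D A (corner A S) = (\<lambda>s. corner A {s}) ` S"
      using link_vertset_corner[OF A] S by blast
  qed
qed

text \<open>The link of every vertex of X_D is a simplicial complex: a cell (the corner of a
  cube (A,S)) has exactly |S| vertices and is determined by them, and two cells meet in
  the corner of the common face (A, S \<inter> S').\<close>
theorem link_is_simplicial:
  assumes A: "A \<in> D" shows "link_simplicial G Gl Ind D A"
proof -
  let ?L = "link_cells G Gl Ind D A" and ?V = "link_vertset G Gl Ind D A"
  have cell: "\<exists>S. S \<noteq> {} \<and> spans_cube A S \<and> c = corner A S" if "c \<in> ?L" for c
    using that link_cells_iff[OF A] by blast
  have card: "card (?V c) = link_dim c + 1" if c: "c \<in> ?L" for c
  proof -
    obtain S where S: "S \<noteq> {}" "spans_cube A S" "c = corner A S" using cell[OF c] by blast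
    have "card (?V c) = card S"
      using link_vertset_corner[OF A S(1,2)] S(3) card_image inj_corner_vertex
      by (metis inj_on_subset subset_UNIV)
    moreover have "card S \<noteq> 0" using S(1) spans_cube_finite[OF S(2)] by simp
    ultimately show ?thesis using S(3) by simp
  qed
  have inj: "inj_on ?V ?L"
  proof (rule inj_onI)
    fix c d assume c: "c \<in> ?L" and d: "d \<in> ?L" and eq: "?V c = ?V d"
    obtain S where S: "S \<noteq> {}" "spans_cube A S" "c = corner A S" using cell[OF c] by blast
    obtain S' where S': "S' \<noteq> {}" "spans_cube A S'" "d = corner A S'" using cell[OF d] by blast
    have "(\<lambda>s. corner A {s}) ` S = (\<lambda>s. corner A {s}) ` S'"
      using eq link_vertset_corner[OF A S(1,2)] link_vertset_corner[OF A S'(1,2)] S(3) S'(3) by simp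
    then show "c = d" using S(3) S'(3) inj_corner_vertex by (simp add: inj_image_eq_iff)
  qed
  have meet: "\<exists>e\<in>?L. link_face G Gl Ind e c \<and> link_face G Gl Ind e d \<and> ?V e = ?V c \<inter> ?V d"
    if c: "c \<in> ?L" and d: "d \<in> ?L" and ne: "?V c \<inter> ?V d \<noteq> {}" for c d
  proof -
    obtain S where S: "S \<noteq> {}" "spans_cube A S" "c = corner A S" using cell[OF c] by blast
    obtain S' where S': "S' \<noteq> {}" "spans_cube A S'" "d = corner A S'" using cell[OF d] by blast
    have common: "?V c \<inter> ?V d = (\<lambda>s. corner A {s}) ` (S \<inter> S')"
      using link_vertset_corner[OF A S(1,2)] link_vertset_corner[OF A S'(1,2)] S(3) S'(3)
        inj_corner_vertex by (simp add: image_Int)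
    then have "S \<inter> S' \<noteq> {}" using ne by auto
    moreover have "spans_cube A (S \<inter> S')" using spans_cube_subset[OF S(2)] by blast
    ultimately have "corner A (S \<inter> S') \<in> ?L" "?V (corner A (S \<inter> S')) = ?V c \<inter> ?V d"
      using link_cells_iff[OF A] link_vertset_corner[OF A] common by auto
    moreover have "link_face G Gl Ind (corner A (S \<inter> S')) c" "link_face G Gl Ind (corner A (S \<inter> S')) d"
      using S(3) S'(3) unfolding link_face_def corner_def by auto
    ultimately show ?thesis by blast
  qed
  show ?thesis unfolding link_simplicial_def Let_def using card inj meet by blast
qed

text \<open>Combinatorial form of the flag condition at A: a finite nonempty set of glides
  spans a cube of X_D at A as soon as all its elements and pairs do.\<close>
definition flag_at :: "'g \<Rightarrow> bool" where
  "flag_at A \<longleftrightarrow> (\<forall>S. finite S \<and> S \<noteq> {} \<and> (\<forall>s\<in>S. spans_cube A {s}) \<and>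
      (\<forall>s\<in>S. \<forall>t\<in>S. s \<noteq> t \<longrightarrow> spans_cube A {s, t}) \<longrightarrow> spans_cube A S)"

lemma link_edge_iff:
  assumes A: "A \<in> D"
  shows "(\<exists>e\<in>link_cells G Gl Ind D A. link_vertset G Gl Ind D A e = {corner A {s}, corner A {t}})
    \<longleftrightarrow> spans_cube A {s, t}"
  using link_cell_spanned_iff[OF A, of "{s, t}"] by simp

text \<open>If the link at A is flag, then the flag condition holds at A: the corners of the
  glides of S are pairwise adjacent, so they span a cell, which is the corner of (A,S).\<close>
lemma link_flag_imp_flag_at:
  assumes A: "A \<in> D" and flag: "link_flag G Gl Ind D A"
  shows "flag_at A"
  unfolding flag_at_def
proof (intro allI impI)
  let ?L = "link_cells G Gl Ind D A" and ?V = "link_vertset G Gl Ind D A"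
    and ?v = "\<lambda>s. corner A {s}"
  fix S assume S: "finite S \<and> S \<noteq> {} \<and> (\<forall>s\<in>S. spans_cube A {s}) \<and>
    (\<forall>s\<in>S. \<forall>t\<in>S. s \<noteq> t \<longrightarrow> spans_cube A {s, t})"
  have "?v ` S \<subseteq> {v \<in> ?L. link_dim v = 0}"
    unfolding link_vertices[OF A] using S by (intro image_mono) blast
  moreover have "\<forall>x\<in>?v ` S. \<forall>y\<in>?v ` S. x \<noteq> y \<longrightarrow> (\<exists>e\<in>?L. ?V e = {x, y})"
    using S link_edge_iff[OF A] by auto
  ultimately have "\<exists>c\<in>?L. ?V c = ?v ` S"
    using flag S unfolding link_flag_def Let_def by blast
  then show "spans_cube A S" using link_cell_spanned_iff[OF A] by blast
qed

text \<open>Conversely, a set W of pairwise adjacent link vertices consists of the corners of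
  the glides of some S whose elements and pairs span cubes; by the flag condition S spans
  a cube, whose corner is a cell with vertex set W.\<close>
lemma flag_at_imp_link_flag:
  assumes A: "A \<in> D" and flag: "flag_at A"
  shows "link_flag G Gl Ind D A"
  unfolding link_flag_def Let_def
proof (intro allI impI)
  let ?L = "link_cells G Gl Ind D A" and ?V = "link_vertset G Gl Ind D A"
    and ?v = "\<lambda>s. corner A {s}"
  fix W assume W: "finite W \<and> W \<noteq> {} \<and> W \<subseteq> {v \<in> ?L. link_dim v = 0} \<and>
    (\<forall>v\<in>W. \<forall>w\<in>W. v \<noteq> w \<longrightarrow> (\<exists>e\<in>?L. ?V e = {v, w}))"
  then obtain S where S: "S \<subseteq> {s. spans_cube A {s}}" "W = ?v ` S"
    unfolding link_vertices[OF A] subset_image_iff by blast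
  have "finite (?v ` S)" using W S(2) by simp
  then have "finite S"
    by (rule finite_imageD) (rule inj_on_subset[OF inj_corner_vertex subset_UNIV])
  moreover have "S \<noteq> {}" using W S(2) by blast
  moreover have "spans_cube A {s, t}" if "s \<in> S" "t \<in> S" "s \<noteq> t" for s t
  proof -
    have "?v s \<in> W" "?v t \<in> W" "?v s \<noteq> ?v t" using that S(2) by auto
    then have "\<exists>e\<in>?L. ?V e = {?v s, ?v t}" using W by blast
    then show ?thesis using link_edge_iff[OF A] by blast
  qed
  ultimately have "spans_cube A S"
    using flag S(1) unfolding flag_at_def by blast
  then show "\<exists>c\<in>?L. ?V c = W"
    using link_cell_spanned_iff[OF A, of S] \<open>S \<noteq> {}\<close> S(2) by blast
qed

lemma spans_cube_empty:
  assumes A: "A \<in> D" shows "spans_cube A {}"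
proof -
  have "cubic G Gl Ind {}" unfolding cubic_def pre_cubic_def by simp
  moreover have "A \<in> carrier G" using A D_carrier by blast
  ultimately show ?thesis unfolding spans_cube_def using A by simp
qed

lemma spans_cube_singleton_iff:
  assumes A: "A \<in> D" shows "spans_cube A {s} \<longleftrightarrow> s \<in> Gl \<and> s \<otimes> A \<in> D"
proof -
  have "T \<subseteq> {s} \<longleftrightarrow> T = {} \<or> T = {s}" for T by auto
  then show ?thesis
    using A D_carrier cubic_singleton glide_carrier unfolding spans_cube_def cubic_def pre_cubic_def
    by auto
qed

lemma spans_cube_pair_iff:
  assumes A: "A \<in> D" and "s \<noteq> t"
  shows "spans_cube A {s, t} \<longleftrightarrow> (s, t) \<in> Ind \<and> s \<otimes> A \<in> D \<and> t \<otimes> A \<in> D \<and> s \<otimes> t \<otimes> A \<in> D"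
proof -
  have subsets: "T \<subseteq> {s, t} \<longleftrightarrow> T = {} \<or> T = {s} \<or> T = {t} \<or> T = {s, t}" for T by auto
  have "(s, t) \<in> Ind" if "cubic G Gl Ind {s, t}"
    using that assms(2) unfolding cubic_def pre_cubic_def by blast
  moreover have "spans_cube A {s, t} \<longleftrightarrow> s \<otimes> A \<in> D \<and> t \<otimes> A \<in> D \<and> s \<otimes> t \<otimes> A \<in> D"
    if "(s, t) \<in> Ind"
    using A D_carrier cubic_pair[OF that] glide_prod_pair[OF that] glide_carrier
      independent_glides[OF that] unfolding spans_cube_def subsets by auto
  ultimately show ?thesis unfolding spans_cube_def by blast
qed

text \<open>The flag condition everywhere gives regularity: a pre-cubic S whose vertices of
  height at most two lie in D spans a cube of X_D, in particular S is cubic.\<close>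
lemma flag_at_regular:
  assumes flag: "\<forall>A\<in>D. flag_at A"
  shows "regular G Gl Ind D"
  unfolding regular_def
proof (intro ballI allI impI)
  fix A S assume A: "A \<in> D" and hyp: "pre_cubic G Gl Ind S \<and> (\<forall>s\<in>S. s \<otimes> A \<in> D) \<and>
    (\<forall>s\<in>S. \<forall>t\<in>S. s \<noteq> t \<longrightarrow> s \<otimes> t \<otimes> A \<in> D)"
  then have S: "pre_cubic G Gl Ind S" by blast
  show "cubic G Gl Ind S"
  proof (cases "S = {}")
    case True then show ?thesis using S unfolding cubic_def by simp
  next
    case False
    have "\<forall>s\<in>S. spans_cube A {s}"
      using hyp pre_cubic_glides[OF S] spans_cube_singleton_iff[OF A] by blast
    moreover have "\<forall>s\<in>S. \<forall>t\<in>S. s \<noteq> t \<longrightarrow> spans_cube A {s, t}"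
      using hyp pre_cubic_independent[OF S] spans_cube_pair_iff[OF A] by blast
    ultimately have "spans_cube A S"
      using flag A pre_cubic_finite[OF S] False unfolding flag_at_def by blast
    then show ?thesis unfolding spans_cube_def by blast
  qed
qed

text \<open>The flag condition everywhere gives the cube condition: three pairwise independent
  glides whose faces at A lie in D span a 3-cube of X_D.\<close>
lemma flag_at_cube_condition:
  assumes flag: "\<forall>A\<in>D. flag_at A"
  shows "cube_condition G Gl Ind D"
  unfolding cube_condition_def
proof (intro ballI allI impI)
  fix A s1 s2 s3 assume A: "A \<in> D" and hyp: "(s1, s2) \<in> Ind \<and> (s1, s3) \<in> Ind \<and> (s2, s3) \<in> Ind \<and>
    s1 \<otimes> A \<in> D \<and> s2 \<otimes> A \<in> D \<and> s3 \<otimes> A \<in> D \<and>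
    s1 \<otimes> s2 \<otimes> A \<in> D \<and> s1 \<otimes> s3 \<otimes> A \<in> D \<and> s2 \<otimes> s3 \<otimes> A \<in> D"
  let ?S = "{s1, s2, s3}"
  have ind: "(s1, s2) \<in> Ind" "(s1, s3) \<in> Ind" "(s2, s3) \<in> Ind" using hyp by blast+
  have "spans_cube A {s1}" "spans_cube A {s2}" "spans_cube A {s3}"
    using hyp independent_glides[OF ind(1)] independent_glides[OF ind(3)]
    by (simp_all add: spans_cube_singleton_iff[OF A])
  moreover have "spans_cube A {s1, s2}" "spans_cube A {s1, s3}" "spans_cube A {s2, s3}"
    using hyp independent_distinct(1)[OF ind(1)] independent_distinct(1)[OF ind(2)]
      independent_distinct(1)[OF ind(3)] by (simp_all add: spans_cube_pair_iff[OF A])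
  ultimately have "\<forall>s\<in>?S. \<forall>t\<in>?S. s \<noteq> t \<longrightarrow> spans_cube A {s, t}" "\<forall>s\<in>?S. spans_cube A {s}"
    by (simp_all add: insert_commute)
  then have "finite ?S \<and> ?S \<noteq> {} \<and> (\<forall>s\<in>?S. spans_cube A {s}) \<and>
      (\<forall>s\<in>?S. \<forall>t\<in>?S. s \<noteq> t \<longrightarrow> spans_cube A {s, t})" by simp
  then have cube: "spans_cube A ?S" using flag A unfolding flag_at_def by blast
  then have "pre_cubic G Gl Ind ?S" unfolding spans_cube_def cubic_def by blast
  then have "glide_prod G ?S = s1 \<otimes> (s2 \<otimes> s3)"
    using pre_cubic_glide_prod_insert[of ?S s1 "{s2, s3}"] glide_prod_pair[OF ind(3)]
      independent_distinct(1)[OF ind(1)] independent_distinct(1)[OF ind(2)] by simp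
  moreover have "glide_prod G ?S \<otimes> A \<in> D" using cube unfolding spans_cube_def by blast
  ultimately show "s1 \<otimes> s2 \<otimes> s3 \<otimes> A \<in> D"
    using independent_glides[OF ind(1)] independent_glides[OF ind(3)] glide_carrier
    by (simp add: m_assoc)
qed

lemma cube_condition_glide_prod:
  assumes cc: "cube_condition G Gl Ind D" and S: "pre_cubic G Gl Ind S"
    and X: "X \<subseteq> S" "card X = 3" and B: "B \<in> carrier G"
    and faces: "\<And>Y. Y \<subset> X \<Longrightarrow> glide_prod G Y \<otimes> B \<in> D"
  shows "glide_prod G X \<otimes> B \<in> D"
proof -
  obtain s1 s2 s3 where X3: "X = {s1, s2, s3}" "s1 \<noteq> s2" "s2 \<noteq> s3" "s1 \<noteq> s3"
    using X(2) card_3_iff by metis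
  have ind: "(s1, s2) \<in> Ind" "(s1, s3) \<in> Ind" "(s2, s3) \<in> Ind"
    using pre_cubic_independent[OF S] X(1) X3 by auto
  have c: "s1 \<in> carrier G" "s2 \<in> carrier G" "s3 \<in> carrier G"
    using pre_cubic_carrier[OF S] X(1) X3(1) by auto
  have prod: "glide_prod G {s1, s2, s3} = s1 \<otimes> (s2 \<otimes> s3)"
    using pre_cubic_glide_prod_insert[OF S, of s1 "{s2, s3}"] glide_prod_pair[OF ind(3)] X X3
    by simp
  have "B \<in> D" using faces[of "{}"] B X3 by auto
  moreover have "s1 \<otimes> B \<in> D" "s2 \<otimes> B \<in> D" "s3 \<otimes> B \<in> D"
    using faces[of "{s1}"] faces[of "{s2}"] faces[of "{s3}"] c X3 by auto
  moreover have "s1 \<otimes> s2 \<otimes> B \<in> D" "s1 \<otimes> s3 \<otimes> B \<in> D" "s2 \<otimes> s3 \<otimes> B \<in> D"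
  proof -
    have "{s1, s2} \<subset> X" "{s1, s3} \<subset> X" "{s2, s3} \<subset> X" using X3 by auto
    then show "s1 \<otimes> s2 \<otimes> B \<in> D" "s1 \<otimes> s3 \<otimes> B \<in> D" "s2 \<otimes> s3 \<otimes> B \<in> D"
      using faces glide_prod_pair[OF ind(1)] glide_prod_pair[OF ind(2)] glide_prod_pair[OF ind(3)]
      by metis+
  qed
  ultimately have "s1 \<otimes> s2 \<otimes> s3 \<otimes> B \<in> D"
    using cc ind unfolding cube_condition_def by blast
  then show ?thesis using X3(1) prod c by (simp add: m_assoc)
qed

text \<open>By induction on |T|, the cube condition propagates membership in D from the
  vertices [T]A with |T| \<le> 2 to all vertices of a pre-cubic set: split off a 3-subset X
  of T and apply the cube condition at B = [T - X]A.\<close>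
lemma cube_condition_vertices:
  assumes cc: "cube_condition G Gl Ind D" and A: "A \<in> D" and S: "pre_cubic G Gl Ind S"
    and low: "\<And>T. T \<subseteq> S \<Longrightarrow> card T \<le> 2 \<Longrightarrow> glide_prod G T \<otimes> A \<in> D"
  shows "T \<subseteq> S \<Longrightarrow> glide_prod G T \<otimes> A \<in> D"
proof (induction "card T" arbitrary: T rule: less_induct)
  case less
  show ?case
  proof (cases "card T \<le> 2")
    case True
    then show ?thesis using low less.prems by blast
  next
    case False
    obtain X where X: "X \<subseteq> T" "card X = 3"
      using obtain_subset_with_card_n[of 3 T] False by force
    define R where "R = T - X"
    define B where "B = glide_prod G R \<otimes> A"
    have fin: "finite T" using less.prems pre_cubic_finite[OF S] finite_subset by blast
    have RS: "R \<subseteq> S" using less.prems R_def by blast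
    have B: "B \<in> carrier G"
      unfolding B_def using A D_carrier RS by (auto intro!: pre_cubic_glide_prod_closed[OF S])
    have split: "glide_prod G (Y \<union> R) \<otimes> A = glide_prod G Y \<otimes> B" if Y: "Y \<subseteq> X" for Y
    proof -
      have "Y \<subseteq> S" using Y X(1) less.prems by blast
      then have "glide_prod G (Y \<union> R) = glide_prod G Y \<otimes> glide_prod G R"
        by (rule pre_cubic_glide_prod_union[OF S _ RS]) (use Y R_def in blast)
      moreover have "glide_prod G Y \<in> carrier G" "glide_prod G R \<in> carrier G"
        using \<open>Y \<subseteq> S\<close> RS by (auto intro!: pre_cubic_glide_prod_closed[OF S])
      moreover have "A \<in> carrier G" using A D_carrier by blast
      ultimately show ?thesis unfolding B_def by (simp add: m_assoc)
    qed
    have faces: "glide_prod G Y \<otimes> B \<in> D" if Y: "Y \<subset> X" for Y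
    proof -
      have "card (Y \<union> R) < card T"
        unfolding R_def using fin X(1) Y by (intro psubset_card_mono) auto
      moreover have "Y \<union> R \<subseteq> S" using Y X(1) RS less.prems by blast
      ultimately have "glide_prod G (Y \<union> R) \<otimes> A \<in> D" by (rule less.hyps)
      then show ?thesis using split[of Y] Y by auto
    qed
    have "glide_prod G X \<otimes> B \<in> D"
      using cube_condition_glide_prod[OF cc S _ X(2) B faces] X(1) less.prems by blast
    moreover have "X \<union> R = T" using X(1) R_def by blast
    ultimately show ?thesis using split[of X] by simp
  qed
qed

text \<open>Conversely, regularity and the cube condition give the flag condition: a set S whose
  glides and pairs span cubes at A is pre-cubic, hence cubic by regularity, and all its
  vertices lie in D by the previous lemma.\<close>
lemma regular_cube_condition_flag:
  assumes reg: "regular G Gl Ind D" and cc: "cube_condition G Gl Ind D" and A: "A \<in> D"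
  shows "flag_at A"
  unfolding flag_at_def
proof (intro allI impI)
  fix S assume hyp: "finite S \<and> S \<noteq> {} \<and> (\<forall>s\<in>S. spans_cube A {s}) \<and>
    (\<forall>s\<in>S. \<forall>t\<in>S. s \<noteq> t \<longrightarrow> spans_cube A {s, t})"
  have single: "s \<in> Gl" "s \<otimes> A \<in> D" if "s \<in> S" for s
    using hyp that spans_cube_singleton_iff[OF A] by blast+
  have pair: "(s, t) \<in> Ind" "s \<otimes> t \<otimes> A \<in> D" if "s \<in> S" "t \<in> S" "s \<noteq> t" for s t
    using hyp that spans_cube_pair_iff[OF A that(3)] by blast+
  have S: "pre_cubic G Gl Ind S" unfolding pre_cubic_def using hyp by (auto intro: single(1) pair(1))
  have "cubic G Gl Ind S"
    by (rule reg[unfolded regular_def, rule_format, OF A]) (intro conjI S ballI impI single pair; assumption)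
  moreover have "glide_prod G T \<otimes> A \<in> D" if "T \<subseteq> S" for T
  proof (rule cube_condition_vertices[OF cc A S _ that])
    fix T assume T: "T \<subseteq> S" "card T \<le> 2"
    have "finite T" using T(1) hyp finite_subset by blast
    from T(2) consider "card T = 0" | "card T = 1" | "card T = 2" by linarith
    then have "spans_cube A T"
    proof cases
      case 1
      then have "T = {}" using \<open>finite T\<close> by simp
      then show ?thesis using spans_cube_empty[OF A] by simp
    next
      case 2
      then obtain s where "T = {s}" by (rule card_1_singletonE)
      then show ?thesis using hyp T(1) by auto
    next
      case 3
      then obtain s t where "T = {s, t}" "s \<noteq> t" by (meson card_2_iff)
      then show ?thesis using hyp T(1) by auto
    qed
    then show "glide_prod G T \<otimes> A \<in> D" unfolding spans_cube_def by blast
  qed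
  ultimately show "spans_cube A S" unfolding spans_cube_def by blast
qed

lemma nonpositively_curved_iff_flag:
  "nonpositively_curved G Gl Ind D \<longleftrightarrow> (\<forall>A\<in>D. flag_at A)"
  unfolding nonpositively_curved_def
  using link_is_simplicial link_flag_imp_flag_at flag_at_imp_link_flag by blast

end

theorem theorem4p4:
  fixes G :: "('g, 'b) monoid_scheme" and Gl :: "'g set" and Ind :: "('g \<times> 'g) set"
    and D :: "'g set"
  assumes "gliding_system G Gl Ind"
    and "D \<subseteq> carrier G"
  shows "nonpositively_curved G Gl Ind D \<longleftrightarrow> regular G Gl Ind D \<and> cube_condition G Gl Ind D"
proof -
  interpret glide_subcomplex G Gl Ind D
    using assms unfolding glide_subcomplex_def glide_subcomplex_axioms_def gliding_def
      gliding_axioms_def gliding_system_def by blast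
  have "nonpositively_curved G Gl Ind D \<longleftrightarrow> (\<forall>A\<in>D. flag_at A)"
    by (rule nonpositively_curved_iff_flag)
  also have "\<dots> \<longleftrightarrow> regular G Gl Ind D \<and> cube_condition G Gl Ind D"
    using flag_at_regular flag_at_cube_condition regular_cube_condition_flag by blast
  finally show ?thesis .
qed

end
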